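(* Let $K_{m_1,m_2}$ be the complete bipartite graph with bipartition $(X,Y)$, $|X|=m_1$, $|Y|=m_2$, where $2\le m_1\le m_2$, and let $s\ge 2$ be an integer. Then: (1) if $s\le m_2-m_1+2$, then $\kappa^*_{K_{m_1,m_2}}(S)=m_1$ for every $S\subseteq X\cup Y$ with $|S|=s$ and $S\not\subseteq X$; (2) if $2\le s\le m_1$, then $\kappa^*_{K_{m_1,m_2}}(S)=m_2$ for every $S\subseteq X$ with $|S|=s$; (3) if $m_2-m_1+3\le s\le m_1+m_2$, then $\kappa_s^*(K_{m_1,m_2})\ge m_1-\frac{m_1+s-m_2+2}{3}$.
   Context: For $S\subseteq V(G)$ with $|S|\ge 2$, an $S$-Steiner tree of $G$ is a subtree $T$ of $G$ with $S\subseteq V(T)$ all of whose leaves belong to $S$. A family of $S$-Steiner trees $T_1,\dots,T_k$ is completely independent if for all $1\le p<q\le k$: $E(T_p)\cap E(T_q)=\emptyset$, $V(T_p)\cap V(T_q)=S$, and for any two vertices $x_1,x_2\in S$ the $(x_1,x_2)$-paths in $T_p$ and in $T_q$ are internally disjoint. $\kappa^*_G(S)$ is the maximum number of trees in a completely independent family of $S$-Steiner trees in $G$, and $\kappa_s^*(G)=\min\{\kappa^*_G(S): S\subseteq V(G),\ |S|=s\}$. *)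

theory Defs
  imports Complex_Main
begin

text \<open>A (simple, undirected) graph is a pair (V, E) with E a set of 2-element subsets of V.\<close>

definition is_path :: "'a set set \<Rightarrow> 'a \<Rightarrow> 'a \<Rightarrow> 'a list \<Rightarrow> bool" where
  "is_path ET x y p \<longleftrightarrow> p \<noteq> [] \<and> hd p = x \<and> last p = y \<and> distinct p \<and>
     (\<forall>i. Suc i < length p \<longrightarrow> {p ! i, p ! Suc i} \<in> ET)"

definition internal_vertices :: "'a list \<Rightarrow> 'a set" where
  "internal_vertices p = set p - {hd p, last p}"

definition is_cycle :: "'a set set \<Rightarrow> 'a list \<Rightarrow> bool" where
  "is_cycle ET c \<longleftrightarrow> length c \<ge> 3 \<and> distinct c \<and>
     (\<forall>i. Suc i < length c \<longrightarrow> {c ! i, c ! Suc i} \<in> ET) \<and> {last c, hd c} \<in> ET"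

definition is_tree :: "'a set \<Rightarrow> 'a set set \<Rightarrow> bool" where
  "is_tree VT ET \<longleftrightarrow> finite VT \<and> VT \<noteq> {} \<and>
     (\<forall>e\<in>ET. e \<subseteq> VT \<and> card e = 2) \<and>
     (\<forall>u\<in>VT. \<forall>v\<in>VT. \<exists>p. is_path ET u v p) \<and>
     (\<nexists>c. is_cycle ET c)"

definition is_subtree :: "'a set \<times> 'a set set \<Rightarrow> 'a set \<times> 'a set set \<Rightarrow> bool" where
  "is_subtree G T \<longleftrightarrow> fst T \<subseteq> fst G \<and> snd T \<subseteq> snd G \<and> is_tree (fst T) (snd T)"

definition tree_degree :: "'a set set \<Rightarrow> 'a \<Rightarrow> nat" where
  "tree_degree ET v = card {e\<in>ET. v \<in> e}"

definition leaves :: "'a set \<times> 'a set set \<Rightarrow> 'a set" where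
  "leaves T = {v\<in>fst T. tree_degree (snd T) v = 1}"

definition steiner_tree :: "'a set \<times> 'a set set \<Rightarrow> 'a set \<Rightarrow> 'a set \<times> 'a set set \<Rightarrow> bool" where
  "steiner_tree G S T \<longleftrightarrow> is_subtree G T \<and> S \<subseteq> fst T \<and> leaves T \<subseteq> S"

definition compl_indep_family ::
  "'a set \<times> 'a set set \<Rightarrow> 'a set \<Rightarrow> nat \<Rightarrow> (nat \<Rightarrow> 'a set \<times> 'a set set) \<Rightarrow> bool" where
  "compl_indep_family G S k T \<longleftrightarrow>
     (\<forall>i<k. steiner_tree G S (T i)) \<and>
     (\<forall>p<k. \<forall>q<k. p \<noteq> q \<longrightarrow>
        snd (T p) \<inter> snd (T q) = {} \<and>
        fst (T p) \<inter> fst (T q) = S \<and>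
        (\<forall>x1\<in>S. \<forall>x2\<in>S. \<forall>P Q. is_path (snd (T p)) x1 x2 P \<and> is_path (snd (T q)) x1 x2 Q
            \<longrightarrow> internal_vertices P \<inter> internal_vertices Q = {}))"

definition kappa_star :: "'a set \<times> 'a set set \<Rightarrow> 'a set \<Rightarrow> nat" where
  "kappa_star G S = Max {k. \<exists>T. compl_indep_family G S k T}"

definition kappa_star_s :: "nat \<Rightarrow> 'a set \<times> 'a set set \<Rightarrow> nat" where
  "kappa_star_s s G = Min {kappa_star G S | S. S \<subseteq> fst G \<and> card S = s}"

definition complete_bipartite :: "'a set \<Rightarrow> 'a set \<Rightarrow> 'a set \<times> 'a set set" where
  "complete_bipartite X Y = (X \<union> Y, {{x, y} | x y. x \<in> X \<and> y \<in> Y})"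

end

theory Submission
  imports Defs "HOL-Library.Disjoint_Sets"
begin

(* The trees of a completely independent family are edge-disjoint and each of them has an edge
   at every vertex of S, so there are at most as many trees as the degree of any vertex of S:
   m1 if S meets Y, and m2 if S lies in X.

   For the lower bounds every tree is built from a small core (a vertex, an edge, a path of
   length two or a double star inside S) by attaching all remaining vertices of S as leaves.
   Vertices outside the core are then leaves, so paths between vertices of S run through the
   core only, and trees with pairwise disjoint cores form a completely independent family as soon
   as no edge is used twice. The bounds follow by counting how many disjoint cores fit into
   X - S, Y - S and S. *)

section \<open>Paths and trees\<close>

lemma is_path_mono: "is_path E x y p \<Longrightarrow> E \<subseteq> E' \<Longrightarrow> is_path E' x y p"
  unfolding is_path_def by blast

lemma is_path_set_subset:
  assumes "is_path E x y p" "\<forall>e\<in>E. e \<subseteq> V" "x \<in> V"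
  shows "set p \<subseteq> V"
proof
  fix w assume "w \<in> set p"
  then obtain i where i: "i < length p" "p ! i = w" by (auto simp: in_set_conv_nth)
  show "w \<in> V"
  proof (cases i)
    case 0
    then show ?thesis using assms i by (auto simp: is_path_def hd_conv_nth)
  next
    case (Suc j)
    then have "{p ! j, p ! Suc j} \<in> E" using assms i unfolding is_path_def by auto
    then show ?thesis using assms i Suc by auto
  qed
qed

lemma is_path_Cons:
  assumes "is_path E u y p" "v \<notin> set p" "{v, u} \<in> E"
  shows "is_path E v y (v # p)"
  unfolding is_path_def
proof (intro conjI allI impI)
  fix i assume "Suc i < length (v # p)"
  then show "{(v # p) ! i, (v # p) ! Suc i} \<in> E"
    using assms by (cases i) (auto simp: is_path_def hd_conv_nth)
qed (use assms in \<open>auto simp: is_path_def\<close>)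

lemma is_path_rev:
  assumes "is_path E x y p"
  shows "is_path E y x (rev p)"
  unfolding is_path_def
proof (intro conjI allI impI)
  fix i assume i: "Suc i < length (rev p)"
  let ?j = "length p - Suc (Suc i)"
  have "{p ! ?j, p ! Suc ?j} \<in> E"
    using assms i unfolding is_path_def by auto
  moreover have "Suc ?j = length p - Suc i" using i by simp
  ultimately show "{rev p ! i, rev p ! Suc i} \<in> E"
    using i by (simp add: rev_nth insert_commute)
qed (use assms in \<open>auto simp: is_path_def hd_rev last_rev\<close>)

definition has_two_neighbours :: "'a set set \<Rightarrow> 'a \<Rightarrow> bool" where
  "has_two_neighbours E v \<longleftrightarrow> (\<exists>a b. a \<noteq> b \<and> {v, a} \<in> E \<and> {v, b} \<in> E)"

lemma has_two_neighboursI: "{v, a} \<in> E \<Longrightarrow> {v, b} \<in> E \<Longrightarrow> a \<noteq> b \<Longrightarrow> has_two_neighbours E v"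
  unfolding has_two_neighbours_def by blast

lemma two_le_tree_degreeI:
  assumes "finite E" "has_two_neighbours E v"
  shows "2 \<le> tree_degree E v"
proof -
  obtain a b where "a \<noteq> b" "{v, a} \<in> E" "{v, b} \<in> E"
    using assms(2) unfolding has_two_neighbours_def by blast
  then have "{{v, a}, {v, b}} \<subseteq> {e \<in> E. v \<in> e}" using assms by auto
  then have "card {{v, a}, {v, b}} \<le> tree_degree E v"
    unfolding tree_degree_def using assms(1) by (intro card_mono) auto
  moreover have "{v, a} \<noteq> {v, b}" using \<open>a \<noteq> b\<close> by (auto simp: doubleton_eq_iff)
  ultimately show ?thesis by simp
qed

lemma two_le_tree_degree_internal:
  assumes p: "is_path E x y p" and "finite E" and v: "v \<in> internal_vertices p"
  shows "2 \<le> tree_degree E v"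
proof -
  obtain i where i: "i < length p" "p ! i = v" "v \<noteq> hd p" "v \<noteq> last p"
    using v by (auto simp: internal_vertices_def in_set_conv_nth)
  have ne: "p \<noteq> []" and dp: "distinct p" and edge: "\<And>j. Suc j < length p \<Longrightarrow> {p ! j, p ! Suc j} \<in> E"
    using p by (auto simp: is_path_def)
  have "i \<noteq> 0" using i ne by (metis hd_conv_nth)
  moreover have "i \<noteq> length p - 1" using i ne by (auto simp: last_conv_nth)
  ultimately have i0: "0 < i" "Suc i < length p" using i by auto
  have "{v, p ! (i - 1)} \<in> E" using edge[of "i - 1"] i i0 by (simp add: insert_commute)
  moreover have "{v, p ! Suc i} \<in> E" using edge[of i] i i0 by simp
  moreover have "p ! (i - 1) \<noteq> p ! Suc i" using dp i0 by (simp add: nth_eq_iff_index_eq)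
  ultimately show ?thesis using assms(2) by (blast intro: two_le_tree_degreeI has_two_neighboursI)
qed

lemma has_two_neighbours_if_on_cycle:
  assumes "is_cycle E c" "v \<in> set c"
  shows "has_two_neighbours E v"
proof -
  let ?n = "length c"
  have n3: "?n \<ge> 3" and dc: "distinct c" and edge: "\<And>i. Suc i < ?n \<Longrightarrow> {c ! i, c ! Suc i} \<in> E"
    using assms(1) unfolding is_cycle_def by auto
  then have close: "{c ! (?n - 1), c ! 0} \<in> E"
    using assms(1) unfolding is_cycle_def by (metis hd_conv_nth last_conv_nth list.size(3) not_numeral_le_zero)
  define pred where "pred i = (if i = 0 then ?n - 1 else i - 1)" for i
  define succ where "succ i = (if i = ?n - 1 then 0 else Suc i)" for i
  obtain i where i: "i < ?n" "c ! i = v" using assms(2) by (auto simp: in_set_conv_nth)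
  have "{c ! pred i, c ! i} \<in> E"
    using edge[of "i - 1"] close i unfolding pred_def by auto
  moreover have "{c ! i, c ! succ i} \<in> E"
    using edge[of i] close i n3 unfolding succ_def by (auto simp: insert_commute)
  moreover have "pred i \<noteq> succ i" "pred i < ?n" "succ i < ?n"
    using i n3 unfolding pred_def succ_def by auto
  then have "c ! pred i \<noteq> c ! succ i" using dc by (simp add: nth_eq_iff_index_eq)
  ultimately show ?thesis using i by (metis has_two_neighboursI insert_commute)
qed

lemma is_tree_singleton: "is_tree {v} {}"
  unfolding is_tree_def is_cycle_def
  by (auto intro!: exI[of _ "[v]"] simp: is_path_def)

lemma is_path_insert_leaf:
  assumes con: "\<forall>a\<in>V. \<forall>b\<in>V. \<exists>p. is_path E a b p" and edges: "\<forall>e\<in>E. e \<subseteq> V"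
    and v: "v \<notin> V" and u: "u \<in> V" and a: "a \<in> insert v V" and b: "b \<in> insert v V"
  shows "\<exists>p. is_path (insert {v, u} E) a b p"
proof -
  let ?E = "insert {v, u} E"
  have from_u: "\<exists>p. is_path ?E v w p" if w: "w \<in> V" for w
  proof -
    obtain p where p: "is_path E u w p" using con u w by blast
    have "v \<notin> set p" using is_path_set_subset[OF p edges u] v by blast
    then show ?thesis using p by (blast intro: is_path_Cons is_path_mono)
  qed
  consider "a = v" "b = v" | "a = v" "b \<in> V" | "a \<in> V" "b = v" | "a \<in> V" "b \<in> V"
    using a b by blast
  then show ?thesis
  proof cases
    case 1
    then show ?thesis by (intro exI[of _ "[v]"]) (simp add: is_path_def)
  next
    case 2
    then show ?thesis using from_u by blast
  next
    case 3
    then show ?thesis using from_u by (blast intro: is_path_rev)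
  next
    case 4
    then show ?thesis using con by (blast intro: is_path_mono)
  qed
qed

lemma not_is_cycle_insert_leaf:
  assumes nc: "\<nexists>c. is_cycle E c" and edges: "\<forall>e\<in>E. e \<subseteq> V"
    and v: "v \<notin> V" and uv: "u \<noteq> v"
  shows "\<not> is_cycle (insert {v, u} E) c"
proof
  assume cy: "is_cycle (insert {v, u} E) c"
  show False
  proof (cases "v \<in> set c")
    case True
    then obtain a b where "a \<noteq> b" "{v, a} \<in> insert {v, u} E" "{v, b} \<in> insert {v, u} E"
      using has_two_neighbours_if_on_cycle[OF cy] unfolding has_two_neighbours_def by blast
    moreover have "w = u" if "{v, w} \<in> insert {v, u} E" for w
      using that edges v uv by (auto simp: doubleton_eq_iff)
    ultimately show False by blast
  next
    case False
    have "c \<noteq> []" using cy unfolding is_cycle_def by auto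
    then have "v \<notin> {c ! i, c ! Suc i}" if "Suc i < length c" for i
      using False that nth_mem[of i c] nth_mem[of "Suc i" c] by auto
    moreover have "v \<notin> {last c, hd c}" using False \<open>c \<noteq> []\<close> by auto
    ultimately have "is_cycle E c"
      using cy unfolding is_cycle_def by auto
    then show False using nc by blast
  qed
qed

lemma is_tree_insert_leaf:
  assumes t: "is_tree V E" and v: "v \<notin> V" and u: "u \<in> V"
  shows "is_tree (insert v V) (insert {v, u} E)"
proof -
  have edges: "\<forall>e\<in>E. e \<subseteq> V" using t unfolding is_tree_def by blast
  have "u \<noteq> v" using u v by blast
  then show ?thesis
    using t u is_path_insert_leaf[OF _ edges v u] not_is_cycle_insert_leaf[OF _ edges v]
    unfolding is_tree_def by auto
qed

lemma is_tree_attach_leaves: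
  assumes "is_tree V E" "finite L" "L \<inter> V = {}" "\<forall>l\<in>L. h l \<in> V"
  shows "is_tree (V \<union> L) (E \<union> (\<lambda>l. {l, h l}) ` L)"
  using assms(2-4)
proof (induction L rule: finite_induct)
  case empty
  then show ?case using assms(1) by simp
next
  case (insert l L)
  then have "is_tree (insert l (V \<union> L)) (insert {l, h l} (E \<union> (\<lambda>l. {l, h l}) ` L))"
    by (intro is_tree_insert_leaf) auto
  then show ?case by simp
qed

lemma finite_edges_if_is_tree: "is_tree V E \<Longrightarrow> finite E"
  unfolding is_tree_def by (metis Pow_iff finite_Pow_iff finite_subset subsetI)

section \<open>Completely independent families\<close>

lemma steiner_tree_edge_at:
  assumes st: "steiner_tree G S T" and v: "v \<in> S" and w: "w \<in> S" "w \<noteq> v"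
  obtains u where "{v, u} \<in> snd T"
proof -
  have "is_tree (fst T) (snd T)" "S \<subseteq> fst T"
    using st unfolding steiner_tree_def is_subtree_def by auto
  then obtain p where p: "is_path (snd T) v w p" using v w unfolding is_tree_def by blast
  then have "Suc 0 < length p"
    using w unfolding is_path_def by (cases p) auto
  then have "{p ! 0, p ! 1} \<in> snd T" "p ! 0 = v"
    using p unfolding is_path_def by (auto simp: hd_conv_nth)
  then show ?thesis using that by blast
qed

lemma two_le_cardE:
  assumes "2 \<le> card S" "v \<in> S"
  obtains w where "w \<in> S" "w \<noteq> v"
proof -
  have "\<not> S \<subseteq> {v}" using assms(1) card_mono[of "{v}" S] by fastforce
  then show ?thesis using that by blast
qed

lemma compl_indep_family_le_degree:
  assumes fam: "compl_indep_family G S k T" and fin: "finite (snd G)"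
    and v: "v \<in> S" and S2: "2 \<le> card S"
  shows "k \<le> tree_degree (snd G) v"
proof -
  obtain w where w: "w \<in> S" "w \<noteq> v" using two_le_cardE[OF S2 v] .
  have edge_at_v: "\<forall>i\<in>{..<k}. \<exists>e. e \<in> snd (T i) \<and> v \<in> e \<and> e \<in> snd G"
  proof
    fix i assume "i \<in> {..<k}"
    then have st: "steiner_tree G S (T i)" using fam unfolding compl_indep_family_def by auto
    then obtain u where "{v, u} \<in> snd (T i)" using steiner_tree_edge_at[OF st v w] by blast
    moreover have "snd (T i) \<subseteq> snd G" using st unfolding steiner_tree_def is_subtree_def by auto
    ultimately show "\<exists>e. e \<in> snd (T i) \<and> v \<in> e \<and> e \<in> snd G" by blast
  qed
  obtain e where e: "\<forall>i\<in>{..<k}. e i \<in> snd (T i) \<and> v \<in> e i \<and> e i \<in> snd G"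
    using bchoice[OF edge_at_v] by blast
  have "inj_on e {..<k}"
  proof (rule inj_onI)
    fix i j assume ij: "i \<in> {..<k}" "j \<in> {..<k}" "e i = e j"
    show "i = j"
    proof (rule ccontr)
      assume "i \<noteq> j"
      then have "snd (T i) \<inter> snd (T j) = {}"
        using fam ij unfolding compl_indep_family_def by auto
      then show False using e ij by auto
    qed
  qed
  moreover have "e ` {..<k} \<subseteq> {e \<in> snd G. v \<in> e}" using e by auto
  ultimately have "card {..<k} \<le> card {e \<in> snd G. v \<in> e}"
    using fin by (intro card_inj_on_le) auto
  then show ?thesis by (simp add: tree_degree_def)
qed

lemma finite_compl_indep_family_sizes:
  assumes "finite (snd G)" "2 \<le> card S"
  shows "finite {k. \<exists>T. compl_indep_family G S k T}"
proof -
  have "S \<noteq> {}" using assms(2) by auto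
  then obtain v where v: "v \<in> S" by blast
  have "{k. \<exists>T. compl_indep_family G S k T} \<subseteq> {..tree_degree (snd G) v}"
    using compl_indep_family_le_degree[OF _ assms(1) v assms(2)] by blast
  then show ?thesis using finite_subset by blast
qed

lemma kappa_star_ge:
  assumes "finite (snd G)" "2 \<le> card S" "compl_indep_family G S k T"
  shows "k \<le> kappa_star G S"
  unfolding kappa_star_def
  using finite_compl_indep_family_sizes[OF assms(1,2)] assms(3) by (auto intro: Max_ge)

lemma kappa_star_le_degree:
  assumes "finite (snd G)" "2 \<le> card S" "v \<in> S"
  shows "kappa_star G S \<le> tree_degree (snd G) v"
proof -
  have "compl_indep_family G S 0 T" for T
    unfolding compl_indep_family_def by simp
  then show ?thesis
    unfolding kappa_star_def
    using finite_compl_indep_family_sizes[OF assms(1,2)] compl_indep_family_le_degree[OF _ assms(1,3,2)]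
    by (subst Max_le_iff) auto
qed

lemma kappa_star_s_ge:
  assumes "finite (fst G)" "s \<le> card (fst G)"
    and "\<And>S. S \<subseteq> fst G \<Longrightarrow> card S = s \<Longrightarrow> r \<le> real (kappa_star G S)"
  shows "r \<le> real (kappa_star_s s G)"
proof -
  let ?K = "{kappa_star G S | S. S \<subseteq> fst G \<and> card S = s}"
  have "?K \<subseteq> kappa_star G ` Pow (fst G)" by auto
  then have "finite ?K" using assms(1) by (simp add: finite_subset)
  moreover obtain S0 where "S0 \<subseteq> fst G" "card S0 = s"
    using obtain_subset_with_card_n[OF assms(2)] by metis
  then have "?K \<noteq> {}" by blast
  ultimately have "Min ?K \<in> ?K" by (rule Min_in)
  then show ?thesis unfolding kappa_star_s_def using assms(3) by auto
qed

text \<open>Internal vertices of paths have degree at least two, so if each tree has all such vertices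
  in its own core and the cores are disjoint, paths in different trees are internally disjoint.\<close>
lemma compl_indep_familyI_cores:
  assumes steiner: "\<forall>i<k. steiner_tree G S (T i)"
    and verts: "\<forall>i<k. fst (T i) \<subseteq> S \<union> C i"
    and outside: "\<forall>i<k. \<forall>v. v \<notin> C i \<longrightarrow> tree_degree (snd (T i)) v \<le> 1"
    and cores: "disjoint_family_on C {..<k}"
    and edges: "\<forall>i<k. \<forall>j<k. i \<noteq> j \<longrightarrow> snd (T i) \<inter> snd (T j) = {}"
  shows "compl_indep_family G S k T"
proof -
  have internal: "internal_vertices P \<subseteq> C i" if "i < k" "is_path (snd (T i)) x y P" for i x y P
  proof
    fix v assume v: "v \<in> internal_vertices P"
    have "is_tree (fst (T i)) (snd (T i))"
      using steiner \<open>i < k\<close> unfolding steiner_tree_def is_subtree_def by blast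
    then have "finite (snd (T i))" by (rule finite_edges_if_is_tree)
    then have "2 \<le> tree_degree (snd (T i)) v"
      using two_le_tree_degree_internal[OF that(2) _ v] by blast
    then have "\<not> tree_degree (snd (T i)) v \<le> 1" by simp
    then show "v \<in> C i" using outside \<open>i < k\<close> by blast
  qed
  show ?thesis
    unfolding compl_indep_family_def
  proof (intro conjI allI impI ballI)
    fix i j assume ij: "i < k" "j < k" "i \<noteq> j"
    show "snd (T i) \<inter> snd (T j) = {}" using edges ij by blast
    have "S \<subseteq> fst (T i)" "S \<subseteq> fst (T j)"
      using steiner ij unfolding steiner_tree_def by auto
    moreover have "fst (T i) \<subseteq> S \<union> C i" "fst (T j) \<subseteq> S \<union> C j"
      using verts ij by auto
    ultimately show "fst (T i) \<inter> fst (T j) = S"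
      using disjoint_family_onD[OF cores, of i j] ij by auto
    fix x y P Q
    assume "is_path (snd (T i)) x y P \<and> is_path (snd (T j)) x y Q"
    then show "internal_vertices P \<inter> internal_vertices Q = {}"
      using internal[of i x y P] internal[of j x y Q] disjoint_family_onD[OF cores, of i j] ij
      by auto
  qed (use steiner in blast)
qed

section \<open>Trees with a core and pendant leaves\<close>

definition pendant_extension ::
  "'a set \<Rightarrow> 'a set set \<Rightarrow> 'a set \<Rightarrow> ('a \<Rightarrow> 'a) \<Rightarrow> 'a set \<times> 'a set set" where
  "pendant_extension C EC S h = (S \<union> C, EC \<union> (\<lambda>l. {l, h l}) ` (S - C))"

definition admissible_core ::
  "'a set \<times> 'a set set \<Rightarrow> 'a set \<Rightarrow> 'a set \<Rightarrow> 'a set set \<Rightarrow> ('a \<Rightarrow> 'a) \<Rightarrow> bool" where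
  "admissible_core G S C EC h \<longleftrightarrow>
     is_tree C EC \<and> EC \<subseteq> snd G \<and> S \<union> C \<subseteq> fst G \<and>
     (\<forall>l\<in>S - C. h l \<in> C \<and> {l, h l} \<in> snd G) \<and>
     (\<forall>v\<in>C - S. has_two_neighbours (snd (pendant_extension C EC S h)) v)"

lemma pendant_extension_core_edge: "e \<in> EC \<Longrightarrow> e \<in> snd (pendant_extension C EC S h)"
  unfolding pendant_extension_def by simp

lemma pendant_extension_leaf_edge:
  "l \<in> S - C \<Longrightarrow> h l = v \<Longrightarrow> {v, l} \<in> snd (pendant_extension C EC S h)"
  unfolding pendant_extension_def by (auto simp: insert_commute)

lemma steiner_tree_pendant_extension:
  assumes "finite S" and core: "admissible_core G S C EC h"
  shows "steiner_tree G S (pendant_extension C EC S h)"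
proof -
  let ?T = "pendant_extension C EC S h"
  have "is_tree (C \<union> (S - C)) (EC \<union> (\<lambda>l. {l, h l}) ` (S - C))"
    using core assms(1) unfolding admissible_core_def by (intro is_tree_attach_leaves) auto
  then have tree: "is_tree (fst ?T) (snd ?T)"
    unfolding pendant_extension_def by (simp add: Un_commute)
  have "tree_degree (snd ?T) v \<noteq> 1" if "v \<in> C - S" for v
  proof -
    have "has_two_neighbours (snd ?T) v" using core that unfolding admissible_core_def by blast
    then show ?thesis using two_le_tree_degreeI[OF finite_edges_if_is_tree[OF tree]] by fastforce
  qed
  then have "leaves ?T \<subseteq> S"
    unfolding leaves_def pendant_extension_def by auto
  moreover have "fst ?T \<subseteq> fst G" "snd ?T \<subseteq> snd G"
    using core unfolding admissible_core_def pendant_extension_def by auto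
  ultimately show ?thesis
    using tree unfolding steiner_tree_def is_subtree_def by (simp add: pendant_extension_def)
qed

lemma tree_degree_pendant_extension_le_1:
  assumes "\<forall>e\<in>EC. e \<subseteq> C" "\<forall>l\<in>S - C. h l \<in> C" "v \<notin> C"
  shows "tree_degree (snd (pendant_extension C EC S h)) v \<le> 1"
proof -
  have "{e \<in> snd (pendant_extension C EC S h). v \<in> e} \<subseteq> {{v, h v}}"
    using assms unfolding pendant_extension_def by auto
  then have "card {e \<in> snd (pendant_extension C EC S h). v \<in> e} \<le> card {{v, h v}}"
    by (rule card_mono[rotated]) simp
  then show ?thesis unfolding tree_degree_def by simp
qed

text \<open>An edge shared by two pendant extensions with disjoint cores must join a leaf of each
  to the core of the other, in both directions.\<close>
lemma pendant_extensions_disjoint_edges: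
  assumes "is_tree C EC" "is_tree C' EC'"
    and leaf: "\<forall>l\<in>S - C. h l \<in> C" and leaf': "\<forall>l\<in>S - C'. h' l \<in> C'"
    and disj: "C \<inter> C' = {}"
    and no_cross: "\<forall>a\<in>S \<inter> C. \<forall>b\<in>S \<inter> C'. \<not> (h b = a \<and> h' a = b)"
  shows "snd (pendant_extension C EC S h) \<inter> snd (pendant_extension C' EC' S h') = {}"
proof -
  have EC: "\<And>e. e \<in> EC \<Longrightarrow> e \<subseteq> C \<and> card e = 2" and EC': "\<And>e. e \<in> EC' \<Longrightarrow> e \<subseteq> C' \<and> card e = 2"
    using assms(1,2) unfolding is_tree_def by auto
  have False if e: "e \<in> snd (pendant_extension C EC S h)" "e \<in> snd (pendant_extension C' EC' S h')" for e
  proof -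
    consider "e \<in> EC" "e \<in> EC'"
      | l' where "e \<in> EC" "l' \<in> S - C'" "e = {l', h' l'}"
      | l where "e \<in> EC'" "l \<in> S - C" "e = {l, h l}"
      | l l' where "l \<in> S - C" "l' \<in> S - C'" "e = {l, h l}" "e = {l', h' l'}"
      using e unfolding pendant_extension_def by auto
    then show False
    proof cases
      case 1
      then have "e = {}" using EC EC' disj by blast
      then show False using 1 EC by fastforce
    next
      case 2
      then show False using EC leaf' disj by blast
    next
      case 3
      then show False using EC' leaf disj by blast
    next
      case 4
      then have "h l \<in> C" "h' l' \<in> C'" using leaf leaf' by auto
      then have "l = h' l' \<and> h l = l'"
        using 4 disj by (auto simp: doubleton_eq_iff)
      then show False using no_cross 4 \<open>h l \<in> C\<close> \<open>h' l' \<in> C'\<close> by auto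
    qed
  qed
  then show ?thesis by blast
qed

lemma compl_indep_family_pendant_extensions:
  assumes "finite S" and cores: "\<forall>t<k. admissible_core G S (C t) (EC t) (h t)"
    and disj: "disjoint_family_on C {..<k}"
    and no_cross: "\<forall>t<k. \<forall>u<k. t \<noteq> u \<longrightarrow> (\<forall>a\<in>S \<inter> C t. \<forall>b\<in>S \<inter> C u. \<not> (h t b = a \<and> h u a = b))"
  shows "compl_indep_family G S k (\<lambda>t. pendant_extension (C t) (EC t) S (h t))"
proof (rule compl_indep_familyI_cores[where C = C])
  have tree: "is_tree (C t) (EC t)" and leaf: "\<forall>l\<in>S - C t. h t l \<in> C t" if "t < k" for t
    using cores that unfolding admissible_core_def by auto
  show "\<forall>t<k. steiner_tree G S (pendant_extension (C t) (EC t) S (h t))"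
    using cores steiner_tree_pendant_extension[OF assms(1)] by blast
  show "\<forall>t<k. fst (pendant_extension (C t) (EC t) S (h t)) \<subseteq> S \<union> C t"
    by (simp add: pendant_extension_def)
  show "\<forall>t<k. \<forall>v. v \<notin> C t \<longrightarrow> tree_degree (snd (pendant_extension (C t) (EC t) S (h t))) v \<le> 1"
  proof (intro allI impI)
    fix t v assume "t < k" "v \<notin> C t"
    moreover have "\<forall>e\<in>EC t. e \<subseteq> C t" using tree[OF \<open>t < k\<close>] unfolding is_tree_def by blast
    ultimately show "tree_degree (snd (pendant_extension (C t) (EC t) S (h t))) v \<le> 1"
      using leaf[OF \<open>t < k\<close>] by (intro tree_degree_pendant_extension_le_1)
  qed
  show "\<forall>t<k. \<forall>u<k. t \<noteq> u \<longrightarrow>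
      snd (pendant_extension (C t) (EC t) S (h t)) \<inter> snd (pendant_extension (C u) (EC u) S (h u)) = {}"
  proof (intro allI impI)
    fix t u assume "t < k" "u < k" "t \<noteq> u"
    then show "snd (pendant_extension (C t) (EC t) S (h t)) \<inter> snd (pendant_extension (C u) (EC u) S (h u)) = {}"
      using tree leaf no_cross disjoint_family_onD[OF disj, of t u]
      by (intro pendant_extensions_disjoint_edges) auto
  qed
qed (rule disj)

section \<open>Double stars in complete bipartite graphs\<close>

lemma complete_bipartite_edge:
  "x \<in> X \<Longrightarrow> y \<in> Y \<Longrightarrow> {x, y} \<in> snd (complete_bipartite X Y)"
  unfolding complete_bipartite_def by auto

lemma complete_bipartite_commute: "complete_bipartite X Y = complete_bipartite Y X"
  unfolding complete_bipartite_def by (auto simp: insert_commute)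

definition double_star_edges :: "'a set \<Rightarrow> 'a set \<Rightarrow> 'a \<Rightarrow> 'a \<Rightarrow> 'a set set" where
  "double_star_edges A B a b = {{x, y} | x y. x \<in> A \<and> y \<in> B \<and> (x = a \<or> y = b)}"

lemma double_star_edgesI: "x \<in> A \<Longrightarrow> y \<in> B \<Longrightarrow> x = a \<or> y = b \<Longrightarrow> {x, y} \<in> double_star_edges A B a b"
  unfolding double_star_edges_def by blast

lemma is_tree_double_star:
  assumes "A \<inter> B = {}" "finite A" "finite B"
    and roots: "(a \<in> A \<and> b \<in> B) \<or> (A = {a} \<and> B = {}) \<or> (A = {} \<and> B = {b})"
  shows "is_tree (A \<union> B) (double_star_edges A B a b)"
proof -
  consider "a \<in> A" "b \<in> B" | "A = {a}" "B = {}" | "A = {}" "B = {b}" using roots by blast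
  then show ?thesis
  proof cases
    case 1
    have star: "is_tree ({a} \<union> B) ({} \<union> (\<lambda>y. {y, a}) ` B)"
      using assms 1 by (intro is_tree_attach_leaves is_tree_singleton) auto
    have "is_tree (({a} \<union> B) \<union> (A - {a})) (({} \<union> (\<lambda>y. {y, a}) ` B) \<union> (\<lambda>x. {x, b}) ` (A - {a}))"
      using assms 1 by (intro is_tree_attach_leaves[OF star]) auto
    moreover have "({a} \<union> B) \<union> (A - {a}) = A \<union> B" using 1 by auto
    moreover have "({} \<union> (\<lambda>y. {y, a}) ` B) \<union> (\<lambda>x. {x, b}) ` (A - {a}) = double_star_edges A B a b"
      using 1 unfolding double_star_edges_def by (auto simp: insert_commute)
    ultimately show ?thesis by simp
  qed (auto simp: double_star_edges_def is_tree_singleton)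
qed

definition bipartite_core ::
  "'a set \<Rightarrow> 'a set \<Rightarrow> 'a set \<Rightarrow> 'a set \<Rightarrow> 'a set \<Rightarrow> 'a \<Rightarrow> 'a \<Rightarrow> ('a \<Rightarrow> 'a) \<Rightarrow> bool" where
  "bipartite_core X Y S A B a b h \<longleftrightarrow>
     A \<subseteq> X \<and> B \<subseteq> Y \<and> ((a \<in> A \<and> b \<in> B) \<or> (A = {a} \<and> B = {}) \<or> (A = {} \<and> B = {b})) \<and>
     (\<forall>l\<in>S - (A \<union> B). (l \<in> X \<longrightarrow> h l \<in> B) \<and> (l \<in> Y \<longrightarrow> h l \<in> A)) \<and>
     (\<forall>v\<in>(A \<union> B) - S.
        has_two_neighbours (snd (pendant_extension (A \<union> B) (double_star_edges A B a b) S h)) v)"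

lemma admissible_core_if_bipartite_core:
  assumes "finite X" "finite Y" "X \<inter> Y = {}" "S \<subseteq> X \<union> Y"
    and core: "bipartite_core X Y S A B a b h"
  shows "admissible_core (complete_bipartite X Y) S (A \<union> B) (double_star_edges A B a b) h"
proof -
  have AB: "A \<subseteq> X" "B \<subseteq> Y" using core unfolding bipartite_core_def by auto
  then have "is_tree (A \<union> B) (double_star_edges A B a b)"
    using assms core unfolding bipartite_core_def
    by (intro is_tree_double_star) (auto intro: finite_subset)
  moreover have "double_star_edges A B a b \<subseteq> snd (complete_bipartite X Y)"
    using AB unfolding double_star_edges_def by (auto intro: complete_bipartite_edge)
  moreover have "{l, h l} \<in> snd (complete_bipartite X Y)" if "l \<in> S - (A \<union> B)" for l
    using that core assms(4) AB complete_bipartite_edge[of l X "h l" Y] complete_bipartite_edge[of "h l" X l Y]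
    unfolding bipartite_core_def by (auto simp: insert_commute)
  ultimately show ?thesis
    using assms AB core unfolding admissible_core_def bipartite_core_def complete_bipartite_def
    by auto
qed

lemma no_cross_if_bipartite_cores:
  assumes XY: "X \<inter> Y = {}"
    and core: "bipartite_core X Y S A B a b h" and core': "bipartite_core X Y S A' B' a' b' h'"
    and disj: "(A \<union> B) \<inter> (A' \<union> B') = {}"
    and no_cross: "\<forall>x\<in>S \<inter> A. \<forall>y\<in>S \<inter> B'. \<not> (h y = x \<and> h' x = y)"
    and no_cross': "\<forall>x\<in>S \<inter> A'. \<forall>y\<in>S \<inter> B. \<not> (h' y = x \<and> h x = y)"
    and x: "x \<in> S \<inter> (A \<union> B)" and y: "y \<in> S \<inter> (A' \<union> B')"
  shows "\<not> (h y = x \<and> h' x = y)"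
proof
  assume hxy: "h y = x \<and> h' x = y"
  have sides: "A \<subseteq> X" "B \<subseteq> Y" "A' \<subseteq> X" "B' \<subseteq> Y"
    using core core' unfolding bipartite_core_def by auto
  have leaf: "\<forall>l\<in>S - (A \<union> B). (l \<in> X \<longrightarrow> h l \<in> B) \<and> (l \<in> Y \<longrightarrow> h l \<in> A)"
    using core unfolding bipartite_core_def by blast
  have y_leaf: "y \<in> S - (A \<union> B)" using y disj by auto
  show False
  proof (cases "x \<in> X")
    case True
    then have "x \<in> A" using x sides XY by auto
    moreover have "y \<notin> X" using leaf y_leaf hxy True sides XY by auto
    then have "y \<in> B'" using y sides by auto
    ultimately show False using no_cross x y hxy by blast
  next
    case False
    then have "x \<in> B" using x sides by auto
    moreover have "y \<notin> Y" using leaf y_leaf hxy False sides by auto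
    then have "y \<in> A'" using y sides by auto
    ultimately show False using no_cross' x y hxy by blast
  qed
qed

lemma compl_indep_family_double_stars:
  assumes fin: "finite X" "finite Y" and XY: "X \<inter> Y = {}" and SXY: "S \<subseteq> X \<union> Y"
    and cores: "\<forall>t<k. bipartite_core X Y S (A t) (B t) (a t) (b t) (h t)"
    and disjA: "disjoint_family_on A {..<k}" and disjB: "disjoint_family_on B {..<k}"
    and no_cross: "\<forall>t<k. \<forall>u<k. t \<noteq> u \<longrightarrow> (\<forall>x\<in>S \<inter> A t. \<forall>y\<in>S \<inter> B u. \<not> (h t y = x \<and> h u x = y))"
  shows "\<exists>T. compl_indep_family (complete_bipartite X Y) S k T"
proof -
  have sides: "A t \<subseteq> X" "B t \<subseteq> Y" if "t < k" for t
    using cores that unfolding bipartite_core_def by auto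
  have disj: "disjoint_family_on (\<lambda>t. A t \<union> B t) {..<k}"
    unfolding disjoint_family_on_def
  proof (intro ballI impI)
    fix t u assume "t \<in> {..<k}" "u \<in> {..<k}" "t \<noteq> u"
    then show "(A t \<union> B t) \<inter> (A u \<union> B u) = {}"
      using disjoint_family_onD[OF disjA, of t u] disjoint_family_onD[OF disjB, of t u]
        sides[of t] sides[of u] XY
      by auto
  qed
  have no_cross': "\<forall>t<k. \<forall>u<k. t \<noteq> u \<longrightarrow>
      (\<forall>x\<in>S \<inter> (A t \<union> B t). \<forall>y\<in>S \<inter> (A u \<union> B u). \<not> (h t y = x \<and> h u x = y))"
  proof (intro allI impI ballI)
    fix t u x y
    assume "t < k" "u < k" "t \<noteq> u" "x \<in> S \<inter> (A t \<union> B t)" "y \<in> S \<inter> (A u \<union> B u)"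
    then show "\<not> (h t y = x \<and> h u x = y)"
      using cores no_cross disjoint_family_onD[OF disj, of t u]
      by (intro no_cross_if_bipartite_cores[OF XY]) auto
  qed
  have "finite S" using fin SXY by (meson finite_UnI finite_subset)
  moreover have admissible: "\<forall>t<k. admissible_core (complete_bipartite X Y) S (A t \<union> B t)
      (double_star_edges (A t) (B t) (a t) (b t)) (h t)"
    using cores by (simp add: admissible_core_if_bipartite_core[OF fin XY SXY])
  ultimately show ?thesis
    using compl_indep_family_pendant_extensions[OF _ admissible disj no_cross'] by blast
qed

lemma bipartite_core_edge:
  assumes XY: "X \<inter> Y = {}" and x: "x \<in> X" and y: "y \<in> Y - S"
    and x': "x' \<in> S \<inter> X" "x' \<noteq> x" and y': "x \<notin> S \<Longrightarrow> y' \<in> S \<inter> Y"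
    and h: "\<forall>l\<in>X. h l = y" "\<forall>l\<in>Y. h l = x"
  shows "bipartite_core X Y S {x} {y} x y h"
proof -
  let ?E = "snd (pendant_extension ({x} \<union> {y}) (double_star_edges {x} {y} x y) S h)"
  have "{x, y} \<in> ?E" by (intro pendant_extension_core_edge double_star_edgesI) auto
  moreover have "{y, x'} \<in> ?E"
    using x' y h by (intro pendant_extension_leaf_edge) auto
  ultimately have "has_two_neighbours ?E y"
    using x' by (intro has_two_neighboursI[of y x _ x']) (auto simp: insert_commute)
  moreover have "has_two_neighbours ?E x" if "x \<notin> S"
  proof -
    have "{x, y'} \<in> ?E"
      using that y y' h XY by (intro pendant_extension_leaf_edge) auto
    then show ?thesis
      using \<open>{x, y} \<in> ?E\<close> y y'[OF that] by (intro has_two_neighboursI[of x y _ y']) auto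
  qed
  ultimately show ?thesis
    unfolding bipartite_core_def using x y h by auto
qed

lemma bipartite_core_star_in_S:
  assumes "S \<inter> X = {x}" "S \<subseteq> X \<union> Y" "\<forall>l\<in>Y. h l = x"
  shows "bipartite_core X Y S {x} {} x b h"
  unfolding bipartite_core_def using assms by auto

lemma bipartite_core_star:
  assumes XY: "X \<inter> Y = {}" and y: "y \<in> Y" and S: "S \<subseteq> X" "x1 \<in> S" "x2 \<in> S" "x1 \<noteq> x2"
  shows "bipartite_core X Y S {} {y} a y (\<lambda>_. y)"
proof -
  let ?E = "snd (pendant_extension ({} \<union> {y}) (double_star_edges {} {y} a y) S (\<lambda>_. y))"
  have "y \<notin> S" using XY y S by auto
  then have "{y, x1} \<in> ?E" "{y, x2} \<in> ?E"
    using S by (auto intro!: pendant_extension_leaf_edge)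
  then have "has_two_neighbours ?E y" using S by (intro has_two_neighboursI)
  then show ?thesis
    unfolding bipartite_core_def using XY y S by auto
qed

lemma bipartite_core_cherry:
  assumes "x1 \<in> S \<inter> X" "x2 \<in> S \<inter> X" "x1 \<noteq> x2" "y \<in> Y - S"
    and h: "\<forall>l\<in>X. h l = y" "\<forall>l\<in>Y. h l \<in> {x1, x2}"
  shows "bipartite_core X Y S {x1, x2} {y} x1 y h"
proof -
  let ?E = "snd (pendant_extension ({x1, x2} \<union> {y}) (double_star_edges {x1, x2} {y} x1 y) S h)"
  have "{x1, y} \<in> ?E" "{x2, y} \<in> ?E"
    by (intro pendant_extension_core_edge double_star_edgesI; simp)+
  then have "has_two_neighbours ?E y"
    using assms(3) by (intro has_two_neighboursI[of y x1 _ x2]) (auto simp: insert_commute)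
  then show ?thesis
    unfolding bipartite_core_def using assms by auto
qed

lemma bipartite_core_inside:
  assumes "x1 \<in> S \<inter> X" "x2 \<in> S \<inter> X" "y1 \<in> S \<inter> Y" "y2 \<in> S \<inter> Y"
    and "\<forall>l\<in>X. h l \<in> {y1, y2}" "\<forall>l\<in>Y. h l \<in> {x1, x2}"
  shows "bipartite_core X Y S {x1, x2} {y1, y2} x1 y1 h"
  unfolding bipartite_core_def using assms by auto

section \<open>Families of disjoint cores\<close>

lemma disjoint_family_on_singletons: "inj_on e I \<Longrightarrow> disjoint_family_on (\<lambda>i. {e i}) I"
  unfolding disjoint_family_on_def inj_on_def by auto

lemma disjoint_family_on_pairs:
  "inj_on e (I \<times> UNIV) \<Longrightarrow> disjoint_family_on (\<lambda>i. {e (i, False), e (i, True)}) I"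
  unfolding disjoint_family_on_def inj_on_def by auto

lemma disjoint_family_on_append:
  fixes n m :: nat
  assumes A: "disjoint_family_on A {..<n}" and B: "disjoint_family_on B {..<m}"
    and AB: "(\<Union>i<n. A i) \<inter> (\<Union>j<m. B j) = {}"
  shows "disjoint_family_on (\<lambda>t. if t < n then A t else B (t - n)) {..<n + m}"
  unfolding disjoint_family_on_def
proof (intro ballI impI)
  fix t u assume tu: "t \<in> {..<n + m}" "u \<in> {..<n + m}" "t \<noteq> u"
  consider "t < n" "u < n" | "t < n" "\<not> u < n" | "\<not> t < n" "u < n" | "\<not> t < n" "\<not> u < n"
    by blast
  then show "(if t < n then A t else B (t - n)) \<inter> (if u < n then A u else B (u - n)) = {}"
  proof cases
    case 1
    then show ?thesis using disjoint_family_onD[OF A, of t u] tu by simp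
  next
    case 2
    moreover have "u - n < m" using 2 tu by auto
    ultimately have "A t \<subseteq> (\<Union>i<n. A i)" "B (u - n) \<subseteq> (\<Union>j<m. B j)" by auto
    then show ?thesis using AB 2 by auto
  next
    case 3
    moreover have "t - n < m" using 3 tu by auto
    ultimately have "A u \<subseteq> (\<Union>i<n. A i)" "B (t - n) \<subseteq> (\<Union>j<m. B j)" by auto
    then show ?thesis using AB 3 by auto
  next
    case 4
    then show ?thesis using disjoint_family_onD[OF B, of "t - n" "u - n"] tu by auto
  qed
qed

lemma ex_inj_on_lessThan_into:
  assumes "finite A" "n \<le> card A"
  shows "\<exists>e. inj_on e {..<n} \<and> (\<forall>i<n. e i \<in> A)"
proof -
  obtain e where "e ` {..<n} \<subseteq> A" "inj_on e {..<n}"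
    using card_le_inj[of "{..<n}" A] assms by auto
  then show ?thesis by auto
qed

lemma ex_inj_on_pairs_into:
  assumes "finite A" "2 * n \<le> card A"
  shows "\<exists>e. inj_on e ({..<n} \<times> (UNIV :: bool set)) \<and> (\<forall>i<n. \<forall>\<beta>. e (i, \<beta>) \<in> A)"
proof -
  have "card ({..<n} \<times> (UNIV :: bool set)) \<le> card A"
    using assms(2) by (simp add: card_cartesian_product)
  then obtain e where "e ` ({..<n} \<times> (UNIV :: bool set)) \<subseteq> A" "inj_on e ({..<n} \<times> UNIV)"
    using card_le_inj[of "{..<n} \<times> (UNIV :: bool set)" A] assms(1) by auto
  then show ?thesis by (intro exI[of _ e]) auto
qed

lemma ex_compl_indep_family_stars:
  assumes fin: "finite X" "finite Y" and XY: "X \<inter> Y = {}" and S: "S \<subseteq> X" "2 \<le> card S"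
  shows "\<exists>T. compl_indep_family (complete_bipartite X Y) S (card Y) T"
proof -
  have "S \<noteq> {}" using S(2) by auto
  then obtain x1 where x1: "x1 \<in> S" by blast
  obtain x2 where x2: "x2 \<in> S" "x2 \<noteq> x1" using two_le_cardE[OF S(2) x1] .
  obtain e where e: "inj_on e {..<card Y}" "\<And>i. i < card Y \<Longrightarrow> e i \<in> Y"
    using ex_inj_on_lessThan_into[OF fin(2) order.refl] by blast
  show ?thesis
  proof (rule compl_indep_family_double_stars[OF fin XY])
    show "\<forall>t<card Y. bipartite_core X Y S {} {e t} x1 (e t) (\<lambda>_. e t)"
      using bipartite_core_star[OF XY e(2) S(1) x1 x2(1)] x2(2) by blast
    show "disjoint_family_on (\<lambda>t. {e t}) {..<card Y}"
      using e(1) by (rule disjoint_family_on_singletons)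
  qed (use S in \<open>auto simp: disjoint_family_on_def\<close>)
qed

text \<open>Colour the two vertices of each pair by the second component of their index. If leaves in
  \<open>Y\<close> are attached to the vertex of their own colour in a pair of \<open>eA\<close>, and leaves in \<open>X\<close> to the
  vertex of the opposite colour in a pair of \<open>eB\<close>, then no two trees attach a leaf of each to the
  other in both directions.\<close>
lemma pair_colouring_no_cross:
  assumes eA: "inj_on eA (I \<times> UNIV)" and eB: "inj_on eB (J \<times> UNIV)" and "i \<in> I" "j \<in> J"
  shows "\<not> (eA (i, eB (j, \<beta>) \<in> eB ` (J \<times> {True})) = eA (i, \<alpha>)
          \<and> eB (j, eA (i, \<alpha>) \<notin> eA ` (I \<times> {True})) = eB (j, \<beta>))"
proof
  assume h: "eA (i, eB (j, \<beta>) \<in> eB ` (J \<times> {True})) = eA (i, \<alpha>)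
    \<and> eB (j, eA (i, \<alpha>) \<notin> eA ` (I \<times> {True})) = eB (j, \<beta>)"
  have "eA (i, \<alpha>) \<in> eA ` (I \<times> {True}) \<longleftrightarrow> \<alpha>" "eB (j, \<beta>) \<in> eB ` (J \<times> {True}) \<longleftrightarrow> \<beta>"
    using assms unfolding inj_on_def by blast+
  then have "eA (i, \<beta>) = eA (i, \<alpha>)" "eB (j, \<not> \<alpha>) = eB (j, \<beta>)" using h by simp_all
  then have "\<beta> = \<alpha>" "(\<not> \<alpha>) = \<beta>" using assms unfolding inj_on_def by blast+
  then show False by simp
qed

text \<open>If \<open>S \<inter> X\<close> is a single vertex, the trees centred in \<open>S \<inter> X\<close> are stars and use no vertex
  of \<open>Y - S\<close>; this is why only the first \<open>m\<close> trees get a core vertex in \<open>Y\<close>.\<close>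
locale edge_cores =
  fixes X Y S :: "'a set" and n q m :: nat and eF eG eA :: "nat \<Rightarrow> 'a" and x0 y0 :: 'a
  assumes finite: "finite X" and XY: "X \<inter> Y = {}" and SXY: "S \<subseteq> X \<union> Y"
    and m: "m = (if card (S \<inter> X) = 1 then n else n + q)"
    and eF: "inj_on eF {..<n}" "\<And>i. i < n \<Longrightarrow> eF i \<in> X - S"
    and eA: "inj_on eA {..<q}" "\<And>i. i < q \<Longrightarrow> eA i \<in> S \<inter> X"
    and eG: "inj_on eG {..<m}" "\<And>i. i < m \<Longrightarrow> eG i \<in> Y - S"
    and x0: "x0 \<in> S \<inter> X" and y0: "y0 \<in> S \<inter> Y"
begin

definition core_X :: "nat \<Rightarrow> 'a set" where
  "core_X t = (if t < n then {eF t} else {eA (t - n)})"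
definition core_Y :: "nat \<Rightarrow> 'a set" where
  "core_Y t = (if t < m then {eG t} else {})"
definition centre_X :: "nat \<Rightarrow> 'a" where
  "centre_X t = (if t < n then eF t else eA (t - n))"
definition attach :: "nat \<Rightarrow> 'a \<Rightarrow> 'a" where
  "attach t l = (if l \<in> X then eG t else centre_X t)"

lemma bipartite_core_at:
  assumes t: "t < n + q"
  shows "bipartite_core X Y S (core_X t) (core_Y t) (centre_X t) (eG t) (attach t)"
proof -
  have hX: "\<forall>l\<in>X. attach t l = eG t" and hY: "\<forall>l\<in>Y. attach t l = centre_X t"
    using XY unfolding attach_def by auto
  consider "t < n" | "\<not> t < n" "card (S \<inter> X) = 1" | "\<not> t < n" "card (S \<inter> X) \<noteq> 1" by blast
  then show ?thesis
  proof cases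
    case 1
    then have "bipartite_core X Y S {eF t} {eG t} (eF t) (eG t) (attach t)"
      using eF(2)[OF 1] eG(2)[of t] x0 y0 hX hY m unfolding centre_X_def
      by (intro bipartite_core_edge[OF XY, where x' = x0 and y' = y0]) auto
    then show ?thesis using 1 m unfolding core_X_def core_Y_def centre_X_def by simp
  next
    case 2
    have "eA (t - n) \<in> S \<inter> X" using eA(2)[of "t - n"] t 2 by auto
    then have "S \<inter> X = {eA (t - n)}"
      using 2 by (metis card_1_singletonE singletonD)
    then have "bipartite_core X Y S {eA (t - n)} {} (eA (t - n)) (eG t) (attach t)"
      using SXY hY 2 unfolding centre_X_def by (intro bipartite_core_star_in_S) auto
    then show ?thesis using 2 m unfolding core_X_def core_Y_def centre_X_def by simp
  next
    case 3
    have x: "eA (t - n) \<in> S \<inter> X" using eA(2)[of "t - n"] t 3 by auto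
    have "card (S \<inter> X) \<noteq> 0" using x0 finite by auto
    then have "2 \<le> card (S \<inter> X)" using 3(2) by linarith
    then obtain x' where "x' \<in> S \<inter> X" "x' \<noteq> eA (t - n)"
      using two_le_cardE[OF _ x] by blast
    with x have "bipartite_core X Y S {eA (t - n)} {eG t} (eA (t - n)) (eG t) (attach t)"
      using eG(2)[of t] t 3 hX hY m unfolding centre_X_def
      by (intro bipartite_core_edge[OF XY, where x' = x' and y' = y0]) auto
    then show ?thesis using 3 t m unfolding core_X_def core_Y_def centre_X_def by simp
  qed
qed

lemma disjoint_core_X: "disjoint_family_on core_X {..<n + q}"
proof -
  have "disjoint_family_on (\<lambda>t. if t < n then (\<lambda>i. {eF i}) t else (\<lambda>i. {eA i}) (t - n)) {..<n + q}"
  proof (intro disjoint_family_on_append disjoint_family_on_singletons eF(1) eA(1))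
    have "eF i \<noteq> eA j" if "i < n" "j < q" for i j
      using eF(2)[OF that(1)] eA(2)[OF that(2)] by auto
    then show "(\<Union>i<n. {eF i}) \<inter> (\<Union>j<q. {eA j}) = {}" by auto
  qed
  then show ?thesis unfolding core_X_def by simp
qed

lemma disjoint_core_Y: "disjoint_family_on core_Y I"
  using eG(1) unfolding core_Y_def disjoint_family_on_def inj_on_def by auto

lemma core_Y_outside_S: "S \<inter> core_Y t = {}"
  using eG(2)[of t] unfolding core_Y_def by auto

end

lemma ex_compl_indep_family_edges:
  assumes fin: "finite X" "finite Y" and XY: "X \<inter> Y = {}" and SXY: "S \<subseteq> X \<union> Y"
    and SX: "S \<inter> X \<noteq> {}" and SY: "S \<inter> Y \<noteq> {}"
    and n: "n \<le> card (X - S)" and q: "q \<le> card (S \<inter> X)"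
    and outer: "n + q \<le> card (Y - S) \<or> (card (S \<inter> X) = 1 \<and> n \<le> card (Y - S))"
  shows "\<exists>T. compl_indep_family (complete_bipartite X Y) S (n + q) T"
proof -
  define m where "m = (if card (S \<inter> X) = 1 then n else n + q)"
  have "m \<le> card (Y - S)" using outer unfolding m_def by auto
  then obtain eG where eG: "inj_on eG {..<m}" "\<And>i. i < m \<Longrightarrow> eG i \<in> Y - S"
    using ex_inj_on_lessThan_into[of "Y - S" m] fin by blast
  obtain eF where eF: "inj_on eF {..<n}" "\<And>i. i < n \<Longrightarrow> eF i \<in> X - S"
    using ex_inj_on_lessThan_into[of "X - S" n] fin n by blast
  obtain eA where eA: "inj_on eA {..<q}" "\<And>i. i < q \<Longrightarrow> eA i \<in> S \<inter> X"
    using ex_inj_on_lessThan_into[of "S \<inter> X" q] fin q by blast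
  obtain x0 y0 where x0: "x0 \<in> S \<inter> X" and y0: "y0 \<in> S \<inter> Y" using SX SY by blast
  interpret edge_cores X Y S n q m eF eG eA x0 y0
    using fin XY SXY m_def eF eG eA x0 y0 by unfold_locales auto
  show ?thesis
  proof (rule compl_indep_family_double_stars[OF fin XY SXY _ disjoint_core_X disjoint_core_Y])
    show "\<forall>t<n + q. bipartite_core X Y S (core_X t) (core_Y t) (centre_X t) (eG t) (attach t)"
      using bipartite_core_at by blast
  qed (simp add: core_Y_outside_S)
qed

locale mixed_cores =
  fixes X Y S :: "'a set" and n p r :: nat and eF eG :: "nat \<Rightarrow> 'a"
    and eA eB :: "nat \<times> bool \<Rightarrow> 'a" and x0 y0 :: 'a
  assumes XY: "X \<inter> Y = {}"
    and eF: "inj_on eF {..<n}" "\<And>i. i < n \<Longrightarrow> eF i \<in> X - S"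
    and eG: "inj_on eG {..<n + p}" "\<And>i. i < n + p \<Longrightarrow> eG i \<in> Y - S"
    and eA: "inj_on eA ({..<p + r} \<times> UNIV)" "\<And>i \<beta>. i < p + r \<Longrightarrow> eA (i, \<beta>) \<in> S \<inter> X"
    and eB: "inj_on eB ({..<r} \<times> UNIV)" "\<And>j \<beta>. j < r \<Longrightarrow> eB (j, \<beta>) \<in> S \<inter> Y"
    and x0: "x0 \<in> S \<inter> X" and y0: "y0 \<in> S \<inter> Y"
begin

definition core_X :: "nat \<Rightarrow> 'a set" where
  "core_X t = (if t < n then {eF t} else {eA (t - n, False), eA (t - n, True)})"
definition core_Y :: "nat \<Rightarrow> 'a set" where
  "core_Y t = (if t < n + p then {eG t} else {eB (t - (n + p), False), eB (t - (n + p), True)})"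
definition centre_X :: "nat \<Rightarrow> 'a" where
  "centre_X t = (if t < n then eF t else eA (t - n, False))"
definition centre_Y :: "nat \<Rightarrow> 'a" where
  "centre_Y t = (if t < n + p then eG t else eB (t - (n + p), False))"
definition attach :: "nat \<Rightarrow> 'a \<Rightarrow> 'a" where
  "attach t l = (if l \<in> X then (if t < n + p then eG t else eB (t - (n + p), l \<notin> eA ` ({..<p + r} \<times> {True})))
                 else (if t < n then eF t else eA (t - n, l \<in> eB ` ({..<r} \<times> {True}))))"

lemma attach_X: "n + p \<le> t \<Longrightarrow> l \<in> X \<Longrightarrow> attach t l \<in> {eB (t - (n + p), False), eB (t - (n + p), True)}"
  unfolding attach_def by (cases "l \<in> eA ` ({..<p + r} \<times> {True})") auto

lemma attach_Y: "n \<le> t \<Longrightarrow> l \<in> Y \<Longrightarrow> attach t l \<in> {eA (t - n, False), eA (t - n, True)}"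
  using XY unfolding attach_def by (cases "l \<in> eB ` ({..<r} \<times> {True})") auto

lemma bipartite_core_at:
  assumes t: "t < n + p + r"
  shows "bipartite_core X Y S (core_X t) (core_Y t) (centre_X t) (centre_Y t) (attach t)"
proof -
  consider "t < n" | "n \<le> t" "t < n + p" | "n + p \<le> t" by linarith
  then show ?thesis
  proof cases
    case 1
    have "\<forall>l\<in>X. attach t l = eG t" "\<forall>l\<in>Y. attach t l = eF t" using 1 XY unfolding attach_def by auto
    then have "bipartite_core X Y S {eF t} {eG t} (eF t) (eG t) (attach t)"
      using eF(2)[OF 1] eG(2)[of t] 1 x0 y0
      by (intro bipartite_core_edge[OF XY, where x' = x0 and y' = y0]) auto
    then show ?thesis using 1 unfolding core_X_def core_Y_def centre_X_def centre_Y_def by simp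
  next
    case 2
    have i: "t - n < p + r" using t 2 by arith
    have "eA (t - n, False) \<noteq> eA (t - n, True)" using eA(1) i unfolding inj_on_def by blast
    moreover have "\<forall>l\<in>X. attach t l = eG t" using 2 unfolding attach_def by auto
    ultimately have "bipartite_core X Y S {eA (t - n, False), eA (t - n, True)} {eG t}
        (eA (t - n, False)) (eG t) (attach t)"
      using eA(2)[OF i] eG(2)[of t] 2 attach_Y by (intro bipartite_core_cherry) auto
    then show ?thesis using 2 unfolding core_X_def core_Y_def centre_X_def centre_Y_def by simp
  next
    case 3
    have i: "t - n < p + r" and j: "t - (n + p) < r" using t 3 by arith+
    have "bipartite_core X Y S {eA (t - n, False), eA (t - n, True)}
        {eB (t - (n + p), False), eB (t - (n + p), True)} (eA (t - n, False)) (eB (t - (n + p), False))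
        (attach t)"
      using eA(2)[OF i] eB(2)[OF j] 3 attach_X attach_Y by (intro bipartite_core_inside) auto
    then show ?thesis using 3 unfolding core_X_def core_Y_def centre_X_def centre_Y_def by simp
  qed
qed

lemma disjoint_core_X: "disjoint_family_on core_X {..<n + p + r}"
proof -
  have "disjoint_family_on (\<lambda>t. if t < n then (\<lambda>i. {eF i}) t
      else (\<lambda>i. {eA (i, False), eA (i, True)}) (t - n)) {..<n + (p + r)}"
  proof (intro disjoint_family_on_append disjoint_family_on_singletons disjoint_family_on_pairs eF(1) eA(1))
    have "eF i \<noteq> eA (j, \<beta>)" if "i < n" "j < p + r" for i j \<beta>
      using eF(2)[OF that(1)] eA(2)[OF that(2)] by auto
    then show "(\<Union>i<n. {eF i}) \<inter> (\<Union>j<p + r. {eA (j, False), eA (j, True)}) = {}" by auto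
  qed
  then show ?thesis unfolding core_X_def by (simp add: add.assoc)
qed

lemma disjoint_core_Y: "disjoint_family_on core_Y {..<n + p + r}"
proof -
  have "disjoint_family_on (\<lambda>t. if t < n + p then (\<lambda>i. {eG i}) t
      else (\<lambda>j. {eB (j, False), eB (j, True)}) (t - (n + p))) {..<n + p + r}"
  proof (intro disjoint_family_on_append disjoint_family_on_singletons disjoint_family_on_pairs eG(1) eB(1))
    have "eG i \<noteq> eB (j, \<beta>)" if "i < n + p" "j < r" for i j \<beta>
      using eG(2)[OF that(1)] eB(2)[OF that(2)] by auto
    then show "(\<Union>i<n + p. {eG i}) \<inter> (\<Union>j<r. {eB (j, False), eB (j, True)}) = {}" by auto
  qed
  then show ?thesis unfolding core_Y_def by simp
qed

lemma no_cross:
  assumes "t < n + p + r" "u < n + p + r" "x \<in> S \<inter> core_X t" "y \<in> S \<inter> core_Y u"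
  shows "\<not> (attach t y = x \<and> attach u x = y)"
proof -
  have "\<not> t < n" using assms(3) eF(2)[of t] unfolding core_X_def by auto
  then obtain \<alpha> where \<alpha>: "x = eA (t - n, \<alpha>)" and i: "t - n < p + r"
    using assms(1,3) unfolding core_X_def by (auto split: if_splits)
  have "\<not> u < n + p" using assms(4) eG(2)[of u] unfolding core_Y_def by auto
  then obtain \<beta> where \<beta>: "y = eB (u - (n + p), \<beta>)" and j: "u - (n + p) < r"
    using assms(2,4) unfolding core_Y_def by (auto split: if_splits)
  have "y \<notin> X" "x \<in> X" using eA(2)[OF i] eB(2)[OF j] \<alpha> \<beta> XY by auto
  then show ?thesis
    using pair_colouring_no_cross[OF eA(1) eB(1), of "t - n" "u - (n + p)" \<beta> \<alpha>] i j \<alpha> \<beta>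
      \<open>\<not> t < n\<close> \<open>\<not> u < n + p\<close>
    unfolding attach_def by simp
qed

end

lemma ex_compl_indep_family_mixed:
  assumes fin: "finite X" "finite Y" and XY: "X \<inter> Y = {}" and SXY: "S \<subseteq> X \<union> Y"
    and SX: "S \<inter> X \<noteq> {}" and SY: "S \<inter> Y \<noteq> {}"
    and n: "n \<le> card (X - S)" and np: "n + p \<le> card (Y - S)"
    and pr: "2 * (p + r) \<le> card (S \<inter> X)" and r: "2 * r \<le> card (S \<inter> Y)"
  shows "\<exists>T. compl_indep_family (complete_bipartite X Y) S (n + p + r) T"
proof -
  have fin': "finite (X - S)" "finite (Y - S)" "finite (S \<inter> X)" "finite (S \<inter> Y)"
    using fin by auto
  obtain eF where eF: "inj_on eF {..<n}" "\<And>i. i < n \<Longrightarrow> eF i \<in> X - S"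
    using ex_inj_on_lessThan_into[OF fin'(1) n] by blast
  obtain eG where eG: "inj_on eG {..<n + p}" "\<And>i. i < n + p \<Longrightarrow> eG i \<in> Y - S"
    using ex_inj_on_lessThan_into[OF fin'(2) np] by blast
  obtain eA where eA: "inj_on eA ({..<p + r} \<times> (UNIV :: bool set))"
    "\<And>i \<beta>. i < p + r \<Longrightarrow> eA (i, \<beta>) \<in> S \<inter> X"
    using ex_inj_on_pairs_into[OF fin'(3) pr] by blast
  obtain eB where eB: "inj_on eB ({..<r} \<times> (UNIV :: bool set))"
    "\<And>j \<beta>. j < r \<Longrightarrow> eB (j, \<beta>) \<in> S \<inter> Y"
    using ex_inj_on_pairs_into[OF fin'(4) r] by blast
  obtain x0 y0 where x0: "x0 \<in> S \<inter> X" and y0: "y0 \<in> S \<inter> Y" using SX SY by blast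
  interpret mixed_cores X Y S n p r eF eG eA eB x0 y0
    using XY eF eG eA eB x0 y0 by unfold_locales auto
  show ?thesis
  proof (rule compl_indep_family_double_stars[OF fin XY SXY _ disjoint_core_X disjoint_core_Y])
    show "\<forall>t<n + p + r. bipartite_core X Y S (core_X t) (core_Y t) (centre_X t) (centre_Y t) (attach t)"
      using bipartite_core_at by blast
  qed (use no_cross in blast)
qed

section \<open>The values of \<open>\<kappa>\<^sup>*\<close> for complete bipartite graphs\<close>

lemma finite_complete_bipartite_edges:
  assumes "finite X" "finite Y"
  shows "finite (snd (complete_bipartite X Y))"
proof -
  have "snd (complete_bipartite X Y) \<subseteq> Pow (X \<union> Y)" unfolding complete_bipartite_def by auto
  then show ?thesis using assms by (simp add: finite_subset)
qed

lemma tree_degree_complete_bipartite: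
  assumes "X \<inter> Y = {}" "x \<in> X"
  shows "tree_degree (snd (complete_bipartite X Y)) x = card Y"
proof -
  have "{e \<in> snd (complete_bipartite X Y). x \<in> e} = (\<lambda>y. {x, y}) ` Y"
    using assms unfolding complete_bipartite_def by auto
  moreover have "inj_on (\<lambda>y. {x, y}) Y"
    using assms by (auto simp: inj_on_def doubleton_eq_iff)
  ultimately show ?thesis unfolding tree_degree_def by (simp add: card_image)
qed

lemma kappa_star_complete_bipartite_le:
  assumes "finite X" "finite Y" "X \<inter> Y = {}" "2 \<le> card S" "x \<in> S \<inter> X"
  shows "kappa_star (complete_bipartite X Y) S \<le> card Y"
  using kappa_star_le_degree[OF finite_complete_bipartite_edges[OF assms(1,2)] assms(4)]
    tree_degree_complete_bipartite[OF assms(3)] assms(5) by fastforce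

lemma card_bipartite_split:
  assumes "finite X" "finite Y" "X \<inter> Y = {}" "S \<subseteq> X \<union> Y"
  shows "card X = card (S \<inter> X) + card (X - S)" "card Y = card (S \<inter> Y) + card (Y - S)"
    "card S = card (S \<inter> X) + card (S \<inter> Y)"
proof -
  show "card X = card (S \<inter> X) + card (X - S)" "card Y = card (S \<inter> Y) + card (Y - S)"
    using card_Int_Diff[OF assms(1), of S] card_Int_Diff[OF assms(2), of S] by (simp_all add: Int_commute)
  have "S - X = S \<inter> Y" using assms(3,4) by auto
  then show "card S = card (S \<inter> X) + card (S \<inter> Y)"
    using card_Int_Diff[of S X] assms by (metis finite_UnI finite_subset)
qed

lemma kappa_star_complete_bipartite_subset:
  assumes fin: "finite X" "finite Y" and XY: "X \<inter> Y = {}" and S: "S \<subseteq> X" "2 \<le> card S"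
  shows "kappa_star (complete_bipartite X Y) S = card Y"
proof (rule antisym)
  have "S \<noteq> {}" using S(2) by auto
  then obtain x where "x \<in> S \<inter> X" using S(1) by blast
  then show "kappa_star (complete_bipartite X Y) S \<le> card Y"
    using kappa_star_complete_bipartite_le[OF fin XY S(2)] by blast
  show "card Y \<le> kappa_star (complete_bipartite X Y) S"
    using ex_compl_indep_family_stars[OF fin XY S] kappa_star_ge[OF finite_complete_bipartite_edges[OF fin] S(2)]
    by blast
qed

lemma kappa_star_complete_bipartite_small:
  assumes fin: "finite X" "finite Y" and XY: "X \<inter> Y = {}" and SXY: "S \<subseteq> X \<union> Y"
    and SY: "\<not> S \<subseteq> X" and S2: "2 \<le> card S" and small: "card S + card X \<le> card Y + 2"
  shows "kappa_star (complete_bipartite X Y) S = card X"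
proof (rule antisym)
  have fin': "finite (snd (complete_bipartite X Y))" by (rule finite_complete_bipartite_edges[OF fin])
  obtain y where y: "y \<in> S \<inter> Y" using SY SXY by blast
  have YX: "Y \<inter> X = {}" using XY by blast
  show "kappa_star (complete_bipartite X Y) S \<le> card X"
    using kappa_star_complete_bipartite_le[OF fin(2,1) YX S2 y] by (simp add: complete_bipartite_commute)
  have "\<exists>T. compl_indep_family (complete_bipartite X Y) S (card X) T"
  proof (cases "S \<inter> X = {}")
    case True
    then have "S \<subseteq> Y" using SXY by blast
    then show ?thesis
      using ex_compl_indep_family_stars[OF fin(2,1) YX _ S2] by (simp add: complete_bipartite_commute)
  next
    case False
    have "card (S \<inter> X) \<noteq> 0" using False fin(1) by simp
    moreover note card_bipartite_split[OF fin XY SXY]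
    ultimately have "card (X - S) + card (S \<inter> X) \<le> card (Y - S)
        \<or> (card (S \<inter> X) = 1 \<and> card (X - S) \<le> card (Y - S))"
      using small by linarith
    then have "\<exists>T. compl_indep_family (complete_bipartite X Y) S (card (X - S) + card (S \<inter> X)) T"
      using y False by (intro ex_compl_indep_family_edges[OF fin XY SXY]) auto
    then show ?thesis using card_bipartite_split(1)[OF fin XY SXY] by (simp add: add.commute)
  qed
  then show "card X \<le> kappa_star (complete_bipartite X Y) S"
    using kappa_star_ge[OF fin' S2] by blast
qed

lemma ex_compl_indep_family_bound_outer_le:
  assumes fin: "finite X" "finite Y" and XY: "X \<inter> Y = {}" and SXY: "S \<subseteq> X \<union> Y"
    and card: "card (S \<inter> X) = a" "card (S \<inter> Y) = b" "card (X - S) = f" "card (Y - S) = g"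
    and "a \<noteq> 0" "b \<noteq> 0" "f \<le> g" "a + f \<le> b + g" "g + 3 \<le> 2 * a + f"
  shows "\<exists>k T. compl_indep_family (complete_bipartite X Y) S k T \<and> a + 2 * f + g \<le> 3 * k + 2"
proof -
  have S: "S \<inter> X \<noteq> {}" "S \<inter> Y \<noteq> {}" using assms by auto
  show ?thesis
  proof (cases "a \<le> 2 * (g - f) + 2")
    case True
    define q where "q = min a (g - f)"
    have "\<exists>T. compl_indep_family (complete_bipartite X Y) S (f + q) T"
      using assms unfolding q_def by (intro ex_compl_indep_family_edges[OF fin XY SXY S]) auto
    moreover have "a + 2 * f + g \<le> 3 * (f + q) + 2" using True assms unfolding q_def by auto
    ultimately show ?thesis by blast
  next
    case False
    define r where "r = (a - 2 * (g - f)) div 2"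
    have "\<exists>T. compl_indep_family (complete_bipartite X Y) S (f + (g - f) + r) T"
      using False assms unfolding r_def by (intro ex_compl_indep_family_mixed[OF fin XY SXY S]) auto
    moreover have "a + 2 * f + g \<le> 3 * (f + (g - f) + r) + 2" using False assms unfolding r_def by auto
    ultimately show ?thesis by blast
  qed
qed

lemma ex_compl_indep_family_bound_outer_gt:
  assumes fin: "finite X" "finite Y" and XY: "X \<inter> Y = {}" and SXY: "S \<subseteq> X \<union> Y"
    and card: "card (S \<inter> X) = a" "card (S \<inter> Y) = b" "card (X - S) = f" "card (Y - S) = g"
    and "a \<noteq> 0" "b \<noteq> 0" "g < f" "a + f \<le> b + g"
  shows "\<exists>k T. compl_indep_family (complete_bipartite X Y) S k T \<and> a + 2 * f + g \<le> 3 * k + 2"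
proof -
  have YX: "Y \<inter> X = {}" and SYX: "S \<subseteq> Y \<union> X" using XY SXY by auto
  have S: "S \<inter> Y \<noteq> {}" "S \<inter> X \<noteq> {}" using assms by auto
  note swap = complete_bipartite_commute[of Y X]
  show ?thesis
  proof (cases "a + g \<le> f + 2")
    case True
    have "\<exists>T. compl_indep_family (complete_bipartite Y X) S (g + (f - g)) T"
      using assms by (intro ex_compl_indep_family_edges[OF fin(2,1) YX SYX S]) auto
    moreover have "a + 2 * f + g \<le> 3 * (g + (f - g)) + 2" using True assms by auto
    ultimately show ?thesis unfolding swap by blast
  next
    case False
    define r where "r = a div 2"
    define p where "p = min (f - g) ((b - 2 * r) div 2)"
    have "\<exists>T. compl_indep_family (complete_bipartite Y X) S (g + p + r) T"
      using assms unfolding p_def r_def by (intro ex_compl_indep_family_mixed[OF fin(2,1) YX SYX S]) auto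
    moreover have "a + 2 * f + g \<le> 3 * (g + p + r) + 2" using False assms unfolding p_def r_def by auto
    ultimately show ?thesis unfolding swap by blast
  qed
qed

lemma ex_compl_indep_family_bound:
  assumes fin: "finite X" "finite Y" and XY: "X \<inter> Y = {}" and SXY: "S \<subseteq> X \<union> Y"
    and S2: "2 \<le> card S"
    and card: "card (S \<inter> X) = a" "card (S \<inter> Y) = b" "card (X - S) = f" "card (Y - S) = g"
    and "a + f \<le> b + g" "g + 3 \<le> 2 * a + f"
  shows "\<exists>k T. compl_indep_family (complete_bipartite X Y) S k T \<and> a + 2 * f + g \<le> 3 * k + 2"
proof -
  have split: "card X = a + f" "card Y = b + g"
    using card_bipartite_split[OF fin XY SXY] card by auto
  consider "b = 0" | "a = 0" | "a \<noteq> 0" "b \<noteq> 0" "f \<le> g" | "a \<noteq> 0" "b \<noteq> 0" "g < f"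
    by linarith
  then show ?thesis
  proof cases
    case 1
    then have "S \<subseteq> X" using SXY fin(2) card by auto
    then show ?thesis
      using ex_compl_indep_family_stars[OF fin XY _ S2] split assms 1 by fastforce
  next
    case 2
    have YX: "Y \<inter> X = {}" using XY by blast
    have "S \<subseteq> Y" using 2 SXY fin(1) card by auto
    then have "\<exists>T. compl_indep_family (complete_bipartite X Y) S (card X) T"
      using ex_compl_indep_family_stars[OF fin(2,1) YX _ S2] by (simp add: complete_bipartite_commute)
    then show ?thesis using split assms 2 by fastforce
  next
    case 3
    then show ?thesis using ex_compl_indep_family_bound_outer_le[OF fin XY SXY card] assms by auto
  next
    case 4
    then show ?thesis using ex_compl_indep_family_bound_outer_gt[OF fin XY SXY card] assms by auto
  qed
qed

lemma kappa_star_complete_bipartite_large: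
  assumes fin: "finite X" "finite Y" and XY: "X \<inter> Y = {}" and SXY: "S \<subseteq> X \<union> Y"
    and S2: "2 \<le> card S" and XY_le: "card X \<le> card Y" and large: "card Y + 3 \<le> card S + card X"
  shows "real (card X) - (real (card X) + real (card S) - real (card Y) + 2) / 3
    \<le> real (kappa_star (complete_bipartite X Y) S)"
proof -
  define a b f g where "a = card (S \<inter> X)" "b = card (S \<inter> Y)" "f = card (X - S)" "g = card (Y - S)"
  have split: "card X = a + f" "card Y = b + g" "card S = a + b"
    using card_bipartite_split[OF fin XY SXY] unfolding a_b_f_g_def by auto
  obtain k T where fam: "compl_indep_family (complete_bipartite X Y) S k T"
    and k: "a + 2 * f + g \<le> 3 * k + 2"
    using ex_compl_indep_family_bound[OF fin XY SXY S2 a_b_f_g_def[symmetric]] split XY_le large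
    by auto
  have "real k \<le> real (kappa_star (complete_bipartite X Y) S)"
    using kappa_star_ge[OF finite_complete_bipartite_edges[OF fin] S2 fam] by simp
  moreover have "real a + 2 * real f + real g \<le> 3 * real k + 2"
    using k by (metis (mono_tags) of_nat_add of_nat_le_iff of_nat_mult of_nat_numeral)
  ultimately show ?thesis unfolding split by (simp add: field_simps)
qed

theorem corollary3p8:
  fixes X Y :: "'a set" and m1 m2 s :: nat
  assumes "finite X" and "finite Y" and "X \<inter> Y = {}"
    and "card X = m1" and "card Y = m2"
    and "2 \<le> m1" and "m1 \<le> m2" and "2 \<le> s"
  shows "(s \<le> m2 - m1 + 2 \<longrightarrow>
           (\<forall>S. S \<subseteq> X \<union> Y \<and> card S = s \<and> \<not> S \<subseteq> X \<longrightarrow>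
                kappa_star (complete_bipartite X Y) S = m1))
       \<and> (s \<le> m1 \<longrightarrow>
           (\<forall>S. S \<subseteq> X \<and> card S = s \<longrightarrow> kappa_star (complete_bipartite X Y) S = m2))
       \<and> (m2 - m1 + 3 \<le> s \<and> s \<le> m1 + m2 \<longrightarrow>
           real (kappa_star_s s (complete_bipartite X Y))
             \<ge> real m1 - (real m1 + real s - real m2 + 2) / 3)"
proof (intro conjI impI allI)
  note fin = assms(1,2) and XY = assms(3)
  fix S
  show "kappa_star (complete_bipartite X Y) S = m1"
    if "s \<le> m2 - m1 + 2" "S \<subseteq> X \<union> Y \<and> card S = s \<and> \<not> S \<subseteq> X"
    using kappa_star_complete_bipartite_small[OF fin XY] that assms(4-8) by auto
  show "kappa_star (complete_bipartite X Y) S = m2" if "S \<subseteq> X \<and> card S = s"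
    using kappa_star_complete_bipartite_subset[OF fin XY] that assms(5,8) by auto
next
  assume s: "m2 - m1 + 3 \<le> s \<and> s \<le> m1 + m2"
  have "card (fst (complete_bipartite X Y)) = m1 + m2"
    using card_Un_disjoint[OF assms(1-3)] assms(4,5) by (simp add: complete_bipartite_def)
  then show "real m1 - (real m1 + real s - real m2 + 2) / 3 \<le> real (kappa_star_s s (complete_bipartite X Y))"
    using s assms kappa_star_complete_bipartite_large[OF assms(1-3)]
    by (intro kappa_star_s_ge) (auto simp: complete_bipartite_def)
qed

end
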